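(* Let $t$ be the total number of attribute values. The Random Walk Sampling algorithm (starting from a matching context $C_V$, repeatedly choose uniformly at random, without replacement, a context connected to the current one until a matching one is found, append it to the sample multiset $C_M$ and move to it, until $n$ samples are collected; then output $\mathrm{Exp}^{\epsilon_1}_u(D,C_M)$) has computational complexity $\mathcal O(t)$.
   Context: Dataset $D$ over categorical attributes $A_1,\dots,A_m$ with domain sizes $|A_i|$, $t=\sum_i|A_i|$. A context is a binary vector of length $t$ selecting a subset of values per attribute; $D_C$ is its population in $D$. Two contexts are connected if their Hamming distance is $1$ (so each context has $t$ connected contexts). A context $C$ is matching if $f_M(D_C,V)=\mathrm{true}$, where $f_M$ is a deterministic outlier verification for record $V$ w.r.t. metric $M$. $\mathrm{Exp}^{\epsilon}_u$ is the Exponential mechanism selecting from a set with probability proportional to $\exp(\epsilon u/(2\Delta u))$. The number of samples $n$ is treated as a constant; complexity counts outlier-verification calls and mechanism evaluations. *)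

theory Defs
  imports Main "HOL-Library.Multiset"
begin

text \<open>Attributes A_1..A_m with domain sizes doms = [|A_1|,...,|A_m|]; t = sum_list doms.
  A record is a list of value indices (r!i < doms!i).  A context is a bool list of
  length t; the bits for attribute i start at position attr_offset doms i.\<close>

definition attr_offset :: "nat list \<Rightarrow> nat \<Rightarrow> nat" where
  "attr_offset doms i = sum_list (take i doms)"

definition population :: "nat list \<Rightarrow> nat list multiset \<Rightarrow> bool list \<Rightarrow> nat list multiset" where
  "population doms D C = filter_mset (\<lambda>r. \<forall>i<length doms. C ! (attr_offset doms i + r ! i)) D"

definition matching ::
  "nat list \<Rightarrow> nat list multiset \<Rightarrow> (nat list multiset \<Rightarrow> 'v \<Rightarrow> bool) \<Rightarrow> 'v \<Rightarrow> bool list \<Rightarrow> bool" where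
  "matching doms D fM V C = fM (population doms D C) V"

text \<open>The contexts connected to C (Hamming distance 1) are exactly the flips of one bit.\<close>
definition flip :: "bool list \<Rightarrow> nat \<Rightarrow> bool list" where
  "flip C i = C[i := \<not> C ! i]"

text \<open>One step: examine the connected contexts in the order given by the list of
  flipped positions (a random permutation of [0..<t] = uniform choice without replacement)
  until a matching one is found.\<close>
fun rw_search :: "(bool list \<Rightarrow> bool) \<Rightarrow> bool list \<Rightarrow> nat list \<Rightarrow> bool list option \<times> nat" where
  "rw_search P C [] = (None, 0)"
| "rw_search P C (i # is) =
     (if P (flip C i) then (Some (flip C i), 1)
      else (case rw_search P C is of (r, k) \<Rightarrow> (r, Suc k)))"

text \<open>The walk: one permutation per sample; returns the sample list C_M (if all
  steps succeed) and the total number of verification calls.\<close>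
fun rw_loop :: "(bool list \<Rightarrow> bool) \<Rightarrow> bool list \<Rightarrow> nat list list \<Rightarrow> bool list list option \<times> nat" where
  "rw_loop P C [] = (Some [], 0)"
| "rw_loop P C (p # ps) =
     (case rw_search P C p of
        (None, k) \<Rightarrow> (None, k)
      | (Some C', k) \<Rightarrow> (case rw_loop P C' ps of (r, k') \<Rightarrow> (map_option (Cons C') r, k + k')))"

text \<open>Random Walk Sampling: output the mechanism (Exp^eps1_u(D, -)) applied to the
  sample multiset C_M; the cost counts verification calls plus mechanism evaluations.\<close>
definition random_walk_sampling ::
  "nat list \<Rightarrow> nat list multiset \<Rightarrow> (nat list multiset \<Rightarrow> 'v \<Rightarrow> bool) \<Rightarrow> 'v
   \<Rightarrow> (bool list multiset \<Rightarrow> 'o) \<Rightarrow> bool list \<Rightarrow> nat list list \<Rightarrow> 'o option \<times> nat" where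
  "random_walk_sampling doms D fM V mech CV ps =
     (case rw_loop (matching doms D fM V) CV ps of
        (None, k) \<Rightarrow> (None, k)
      | (Some CM, k) \<Rightarrow> (Some (mech (mset CM)), k + 1))"

end

theory Submission
  imports Defs
begin

text \<open>Each sampling step scans the connected contexts in the order of a permutation of the
  \<open>t\<close> bit positions and stops at the first matching one, so it makes at most \<open>t\<close> verification
  calls. The \<open>n\<close> steps therefore cost at most \<open>n t\<close> calls, and the single mechanism
  evaluation is absorbed as \<open>n t + 1 \<le> (n + 1) t\<close>, using \<open>t \<ge> 1\<close>.
  The count holds for any start context and any verification predicate.\<close>

lemma rw_search_cost_le_length: "snd (rw_search P C p) \<le> length p"
  by (induction p) (auto split: prod.splits)

lemma rw_loop_cost_le_sum_lengths: "snd (rw_loop P C ps) \<le> (\<Sum>p\<leftarrow>ps. length p)"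
proof (induction ps arbitrary: C)
  case Nil
  then show ?case by simp
next
  case (Cons p ps)
  obtain r k where search: "rw_search P C p = (r, k)"
    by fastforce
  have search_cost: "k \<le> length p"
    using rw_search_cost_le_length[of P C p] search by simp
  show ?case
  proof (cases r)
    case None
    then show ?thesis
      using search search_cost by simp
  next
    case (Some C')
    obtain r' k' where loop: "rw_loop P C' ps = (r', k')"
      by fastforce
    have "k' \<le> (\<Sum>p\<leftarrow>ps. length p)"
      using Cons.IH[of C'] loop by simp
    then show ?thesis
      using search search_cost Some loop by simp
  qed
qed

lemma random_walk_sampling_cost:
  "snd (random_walk_sampling doms D fM V mech CV ps)
     \<le> snd (rw_loop (matching doms D fM V) CV ps) + 1"
  unfolding random_walk_sampling_def by (auto split: prod.splits option.splits)

lemma length_permutation_upt: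
  assumes "distinct p" and "set p = {0..<t}"
  shows "length p = t"
  using distinct_card[OF assms(1)] assms(2) by simp

theorem theorem7:
  fixes n :: nat
  shows "\<exists>K::nat. \<forall>(doms::nat list) (D::nat list multiset)
            (fM::nat list multiset \<Rightarrow> 'v \<Rightarrow> bool) (V::'v) (mech::bool list multiset \<Rightarrow> 'o)
            (CV::bool list) (ps::nat list list).
     sum_list doms \<ge> 1 \<longrightarrow> length CV = sum_list doms \<longrightarrow> matching doms D fM V CV \<longrightarrow>
     length ps = n \<longrightarrow> (\<forall>p\<in>set ps. distinct p \<and> set p = {0..<sum_list doms}) \<longrightarrow>
     snd (random_walk_sampling doms D fM V mech CV ps) \<le> K * sum_list doms"
proof (intro exI[of _ "n + 1"] allI impI)
  fix doms :: "nat list" and D fM V mech CV and ps :: "nat list list"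
  let ?t = "sum_list doms"
  assume t_pos: "?t \<ge> 1" and n_steps: "length ps = n"
    and perms: "\<forall>p\<in>set ps. distinct p \<and> set p = {0..<?t}"
  have "(\<Sum>p\<leftarrow>ps. length p) = (\<Sum>p\<leftarrow>ps. ?t)"
    using perms length_permutation_upt by (intro arg_cong[where f = sum_list] map_cong) auto
  also have "\<dots> = n * ?t"
    using n_steps by (simp add: sum_list_triv)
  finally have "snd (rw_loop (matching doms D fM V) CV ps) \<le> n * ?t"
    using rw_loop_cost_le_sum_lengths by metis
  then show "snd (random_walk_sampling doms D fM V mech CV ps) \<le> (n + 1) * ?t"
    using random_walk_sampling_cost[of doms D fM V mech CV ps] t_pos by simp
qed

end
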